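(* Let $\dot x$ be a hereditarily symmetric name supported by a countable $\rho$-closed set $A\subseteq\omega_1$, let $m<\omega$, and suppose $p\in\mathbb P_1$ decides whether $\check m\in\dot x$. Then the restriction of $p$ to the coordinates $(\xi,i,n)$ with $\xi\in A$ decides the same truth value.
   Context: $\rho:\omega_1\setminus\{0\}\to\omega_1$ is the generic regressive map added by finite partial regressive functions; $\operatorname{Succ}_\rho(\xi)=\{\eta:\rho(\eta)=\xi\}$; a set is $\rho$-closed if closed under $\rho$, and $\operatorname{cl}_\rho(A)$ is the least $\rho$-closed superset. $\mathbb P_1=\operatorname{Fn}(\omega_1\times\omega\times\omega,2,{<}\omega)$, finite partial functions ordered by extension. For $\xi<\omega_1,i<\omega$, $s\subseteq\omega$ finite or cofinite, $\tau^{\mathrm{1cas}}_{\xi,i,s}$ flips the value of a condition at each coordinate $(\zeta,i,n)$ with $n\in s$ and $\zeta\in\{\xi\}\cup\operatorname{Succ}_\rho(\xi)$; $\mathscr G^{\mathrm{1cas}}_\rho$ is the group they generate; $\operatorname{Fix}^{\mathrm{1cas}}_\rho(A)$ is the subgroup acting trivially on coordinates $(\zeta,j,n)$ with $\zeta\in\operatorname{cl}_\rho(A)$; $\mathscr F^{\mathrm{1cas}}_\rho$ is the filter of subgroups generated by these for countable $A$; hereditarily symmetric names are with respect to $(\mathbb P_1,\mathscr G^{\mathrm{1cas}}_\rho,\mathscr F^{\mathrm{1cas}}_\rho)$; a name is supported by $A$ if it is fixed by every element of $\operatorname{Fix}^{\mathrm{1cas}}_\rho(A)$. *)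

theory Defs
  imports Main "HOL-Library.Countable_Set"
begin

definition is_omega1 :: "'w::wellorder itself \<Rightarrow> bool" where
  "is_omega1 _ \<longleftrightarrow> \<not> countable (UNIV :: 'w set) \<and> (\<forall>\<xi>::'w. countable {\<eta>. \<eta> < \<xi>})"

definition om0 :: "'w::wellorder" where
  "om0 = (LEAST x. True)"

definition regressive :: "('w::wellorder \<Rightarrow> 'w) \<Rightarrow> bool" where
  "regressive \<rho> \<longleftrightarrow> (\<forall>\<eta>. \<eta> \<noteq> om0 \<longrightarrow> \<rho> \<eta> < \<eta>)"

definition Succ :: "('w::wellorder \<Rightarrow> 'w) \<Rightarrow> 'w \<Rightarrow> 'w set" where
  "Succ \<rho> \<xi> = {\<eta>. \<eta> \<noteq> om0 \<and> \<rho> \<eta> = \<xi>}"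

definition rho_closed :: "('w::wellorder \<Rightarrow> 'w) \<Rightarrow> 'w set \<Rightarrow> bool" where
  "rho_closed \<rho> A \<longleftrightarrow> (\<forall>\<eta>\<in>A. \<eta> \<noteq> om0 \<longrightarrow> \<rho> \<eta> \<in> A)"

definition cl :: "('w::wellorder \<Rightarrow> 'w) \<Rightarrow> 'w set \<Rightarrow> 'w set" where
  "cl \<rho> A = \<Inter>{B. A \<subseteq> B \<and> rho_closed \<rho> B}"

type_synonym 'w cond = "'w \<times> nat \<times> nat \<Rightarrow> bool option"

definition P1 :: "'w cond set" where
  "P1 = {p. finite (dom p)}"

definition le :: "'w cond \<Rightarrow> 'w cond \<Rightarrow> bool" where
  "le q p \<longleftrightarrow> p \<subseteq>\<^sub>m q"

definition tau :: "('w::wellorder \<Rightarrow> 'w) \<Rightarrow> 'w \<Rightarrow> nat \<Rightarrow> nat set \<Rightarrow> 'w cond \<Rightarrow> 'w cond" where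
  "tau \<rho> \<xi> i s p = (\<lambda>c. if c \<in> (({\<xi>} \<union> Succ \<rho> \<xi>) \<times> {i} \<times> s) then map_option Not (p c) else p c)"

text \<open>The group generated by the tau's (each is an involution, so finite
 compositions of generators form the generated group).\<close>
inductive_set G1cas :: "('w::wellorder \<Rightarrow> 'w) \<Rightarrow> ('w cond \<Rightarrow> 'w cond) set" for \<rho> where
  G_id: "id \<in> G1cas \<rho>"
| G_step: "\<pi> \<in> G1cas \<rho> \<Longrightarrow> finite s \<or> finite (- s) \<Longrightarrow> tau \<rho> \<xi> i s \<circ> \<pi> \<in> G1cas \<rho>"

definition Fix :: "('w::wellorder \<Rightarrow> 'w) \<Rightarrow> 'w set \<Rightarrow> ('w cond \<Rightarrow> 'w cond) set" where
  "Fix \<rho> A = {\<pi> \<in> G1cas \<rho>. \<forall>p c. fst c \<in> cl \<rho> A \<longrightarrow> \<pi> p c = p c}"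

text \<open>Names: check names of natural numbers, and general names whose set of
 pairs (name, condition) is indexed by the (arbitrary) type 'i.\<close>
datatype ('w, 'i) name =
    Check nat
  | Name "'i \<Rightarrow> (('w, 'i) name \<times> 'w cond) option"

fun members :: "('w, 'i) name \<Rightarrow> (('w, 'i) name \<times> 'w cond) set" where
  "members (Check n) = {(Check k, Map.empty) | k. k < n}"
| "members (Name f) = {x. \<exists>j. f j = Some x}"

inductive name_eq :: "('w, 'i) name \<Rightarrow> ('w, 'i) name \<Rightarrow> bool" where
  "(\<forall>\<sigma> p. (\<sigma>, p) \<in> members x \<longrightarrow> (\<exists>\<sigma>'. (\<sigma>', p) \<in> members y \<and> name_eq \<sigma> \<sigma>')) \<Longrightarrow>
   (\<forall>\<sigma> p. (\<sigma>, p) \<in> members y \<longrightarrow> (\<exists>\<sigma>'. (\<sigma>', p) \<in> members x \<and> name_eq \<sigma>' \<sigma>)) \<Longrightarrow>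
   name_eq x y"

primrec name_map :: "('w cond \<Rightarrow> 'w cond) \<Rightarrow> ('w, 'i) name \<Rightarrow> ('w, 'i) name" where
  "name_map \<pi> (Check n) = Check n"
| "name_map \<pi> (Name f) = Name (\<lambda>j. map_option (map_prod (name_map \<pi>) \<pi>) (f j))"

definition supported_by :: "('w::wellorder \<Rightarrow> 'w) \<Rightarrow> 'w set \<Rightarrow> ('w, 'i) name \<Rightarrow> bool" where
  "supported_by \<rho> A x \<longleftrightarrow> (\<forall>\<pi> \<in> Fix \<rho> A. name_eq (name_map \<pi> x) x)"

text \<open>Symmetric: the stabilizer lies in the filter generated by the Fix(A),
 A countable.\<close>
definition symmetric :: "('w::wellorder \<Rightarrow> 'w) \<Rightarrow> ('w, 'i) name \<Rightarrow> bool" where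
  "symmetric \<rho> x \<longleftrightarrow> (\<exists>A. countable A \<and> supported_by \<rho> A x)"

inductive HS :: "('w::wellorder \<Rightarrow> 'w) \<Rightarrow> ('w, 'i) name \<Rightarrow> bool" for \<rho> where
  "symmetric \<rho> x \<Longrightarrow> (\<forall>\<sigma> p. (\<sigma>, p) \<in> members x \<longrightarrow> p \<in> P1 \<and> HS \<rho> \<sigma>) \<Longrightarrow> HS \<rho> x"

inductive forces_eq :: "'w cond \<Rightarrow> ('w, 'i) name \<Rightarrow> ('w, 'i) name \<Rightarrow> bool" where
  "p \<in> P1 \<Longrightarrow>
   (\<forall>\<sigma>1 s1. (\<sigma>1, s1) \<in> members \<tau>1 \<longrightarrow>
      (\<forall>r \<in> P1. le r p \<longrightarrow> (\<exists>q \<in> P1. le q r \<and>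
         (le q s1 \<longrightarrow> (\<exists>\<sigma>2 s2. (\<sigma>2, s2) \<in> members \<tau>2 \<and> le q s2 \<and> forces_eq q \<sigma>1 \<sigma>2))))) \<Longrightarrow>
   (\<forall>\<sigma>2 s2. (\<sigma>2, s2) \<in> members \<tau>2 \<longrightarrow>
      (\<forall>r \<in> P1. le r p \<longrightarrow> (\<exists>q \<in> P1. le q r \<and>
         (le q s2 \<longrightarrow> (\<exists>\<sigma>1 s1. (\<sigma>1, s1) \<in> members \<tau>1 \<and> le q s1 \<and> forces_eq q \<sigma>1 \<sigma>2))))) \<Longrightarrow>
   forces_eq p \<tau>1 \<tau>2"

definition forces_mem :: "'w cond \<Rightarrow> ('w, 'i) name \<Rightarrow> ('w, 'i) name \<Rightarrow> bool" where
  "forces_mem p \<tau>1 \<tau>2 \<longleftrightarrow> p \<in> P1 \<and>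
     (\<forall>r \<in> P1. le r p \<longrightarrow> (\<exists>q \<in> P1. le q r \<and>
        (\<exists>\<sigma> s. (\<sigma>, s) \<in> members \<tau>2 \<and> le q s \<and> forces_eq q \<tau>1 \<sigma>)))"

definition forces_not_mem :: "'w cond \<Rightarrow> ('w, 'i) name \<Rightarrow> ('w, 'i) name \<Rightarrow> bool" where
  "forces_not_mem p \<tau>1 \<tau>2 \<longleftrightarrow> p \<in> P1 \<and> \<not> (\<exists>q \<in> P1. le q p \<and> forces_mem q \<tau>1 \<tau>2)"

definition decides_mem :: "'w cond \<Rightarrow> ('w, 'i) name \<Rightarrow> ('w, 'i) name \<Rightarrow> bool" where
  "decides_mem p \<tau>1 \<tau>2 \<longleftrightarrow> forces_mem p \<tau>1 \<tau>2 \<or> forces_not_mem p \<tau>1 \<tau>2"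

end

theory Submission
  imports Defs
begin

(* The group generated by the maps tau consists of the maps flip F, which negate a condition
   on a set F of coordinates.  These are automorphisms of P_1, so they preserve forcing, and
   those in Fix(A) fix x up to extensional equality.  Given r extending the restriction of p
   to A, the finitely many coordinates outside A where r and p disagree can be flipped by an
   element of Fix(A): treat them in increasing order of their first component xi; the
   generator at xi also flips the rho-successors of xi, but these lie above xi (rho is
   regressive) and outside A (A is rho-closed).  Hence some image of r under Fix(A) is
   compatible with p, which transfers forcing of "m in x" between extensions of p and of its
   restriction to A. *)

definition flip :: "('w \<times> nat \<times> nat) set \<Rightarrow> 'w cond \<Rightarrow> 'w cond" where
  "flip F p = (\<lambda>c. if c \<in> F then map_option Not (p c) else p c)"

lemma flip_flip [simp]: "flip F (flip F p) = p"
  by (rule ext) (simp add: flip_def option.map_comp comp_def option.map_ident)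

lemma dom_flip [simp]: "dom (flip F p) = dom p"
  by (auto simp: flip_def dom_def)

lemma flip_empty_set: "flip {} = id"
  by (rule ext) (simp add: flip_def)

lemma flip_comp_flip: "flip F \<circ> flip F' = flip (sym_diff F F')"
  by (rule ext, rule ext) (auto simp: flip_def option.map_comp comp_def option.map_ident)

lemma tau_eq_flip: "tau \<rho> \<xi> i s = flip (({\<xi>} \<union> Succ \<rho> \<xi>) \<times> {i} \<times> s)"
  by (rule ext) (simp add: tau_def flip_def)

lemma le_refl_cond [simp]: "le p p"
  by (simp add: le_def)

lemma le_trans_cond: "le q r \<Longrightarrow> le r p \<Longrightarrow> le q p"
  unfolding le_def using map_le_trans by blast

lemma le_flip: "le q p \<Longrightarrow> le (flip F q) (flip F p)"
  unfolding le_def map_le_def flip_def dom_def by auto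

definition cond_automorphism :: "('w cond \<Rightarrow> 'w cond) \<Rightarrow> bool" where
  "cond_automorphism \<pi> \<longleftrightarrow>
     surj \<pi> \<and> (\<forall>p. \<pi> p \<in> P1 \<longleftrightarrow> p \<in> P1) \<and> (\<forall>p q. le (\<pi> q) (\<pi> p) \<longleftrightarrow> le q p)"

lemma cond_automorphism_le_iff: "cond_automorphism \<pi> \<Longrightarrow> le (\<pi> q) (\<pi> p) \<longleftrightarrow> le q p"
  unfolding cond_automorphism_def by blast

lemma cond_automorphism_P1_iff: "cond_automorphism \<pi> \<Longrightarrow> \<pi> p \<in> P1 \<longleftrightarrow> p \<in> P1"
  unfolding cond_automorphism_def by blast

lemma cond_automorphism_flip: "cond_automorphism (flip F)"
  unfolding cond_automorphism_def
proof (intro conjI allI)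
  show "surj (flip F)"
    by (rule surjI[of _ "flip F"]) simp
  show "flip F p \<in> P1 \<longleftrightarrow> p \<in> P1" for p
    by (simp add: P1_def)
  show "le (flip F q) (flip F p) \<longleftrightarrow> le q p" for p q
    using le_flip[of q p F] le_flip[of "flip F q" "flip F p" F] by auto
qed

lemma cond_automorphism_empty:
  assumes "cond_automorphism \<pi>"
  shows "\<pi> Map.empty = Map.empty"
proof -
  obtain q where q: "\<pi> q = Map.empty"
    using assms unfolding cond_automorphism_def by (metis surjD)
  have "le q Map.empty"
    by (simp add: le_def)
  then have "le (\<pi> q) (\<pi> Map.empty)"
    using cond_automorphism_le_iff[OF assms] by blast
  then show ?thesis
    using q by (simp add: le_def map_le_antisym)
qed

lemma members_name_map:
  assumes "cond_automorphism \<pi>"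
  shows "members (name_map \<pi> a) = map_prod (name_map \<pi>) \<pi> ` members a"
proof (cases a)
  case (Check n)
  then show ?thesis
    using cond_automorphism_empty[OF assms] by (force simp: image_def)
qed (auto simp: image_def)

lemma cond_automorphism_dense_below:
  assumes \<pi>: "cond_automorphism \<pi>"
    and dense: "\<And>r. r \<in> P1 \<Longrightarrow> le r p \<Longrightarrow> \<exists>q\<in>P1. le q r \<and> \<Phi> q"
    and transfer: "\<And>q. \<Phi> q \<Longrightarrow> \<Psi> (\<pi> q)"
  shows "\<forall>r\<in>P1. le r (\<pi> p) \<longrightarrow> (\<exists>q\<in>P1. le q r \<and> \<Psi> q)"
proof (intro ballI impI)
  fix r assume r: "r \<in> P1" "le r (\<pi> p)"
  obtain r' where r': "r = \<pi> r'"
    using \<pi> unfolding cond_automorphism_def by (metis surjD)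
  have "r' \<in> P1" "le r' p"
    using r unfolding r' cond_automorphism_P1_iff[OF \<pi>] cond_automorphism_le_iff[OF \<pi>] by auto
  then obtain q where "q \<in> P1" "le q r'" "\<Phi> q"
    using dense by blast
  then show "\<exists>q\<in>P1. le q r \<and> \<Psi> q"
    using transfer unfolding r' by (metis cond_automorphism_P1_iff[OF \<pi>] cond_automorphism_le_iff[OF \<pi>])
qed

lemma forces_eq_automorphism:
  assumes \<pi>: "cond_automorphism \<pi>" and "forces_eq p a b"
  shows "forces_eq (\<pi> p) (name_map \<pi> a) (name_map \<pi> b)"
  using assms(2)
proof (induction rule: forces_eq.induct)
  case (1 p \<tau>1 \<tau>2)
  let ?n = "name_map \<pi>"
  note le_iff = cond_automorphism_le_iff[OF \<pi>]
  note members_n = members_name_map[OF \<pi>]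
  show ?case
  proof (rule forces_eq.intros; (intro allI impI)?)
    show "\<pi> p \<in> P1"
      using 1(1) cond_automorphism_P1_iff[OF \<pi>] by blast
  next
    fix \<sigma>1' s1' assume "(\<sigma>1', s1') \<in> members (?n \<tau>1)"
    then obtain \<sigma>1 s1 where m: "(\<sigma>1, s1) \<in> members \<tau>1" and eq: "\<sigma>1' = ?n \<sigma>1" "s1' = \<pi> s1"
      by (auto simp: members_n)
    have "\<forall>r\<in>P1. le r (\<pi> p) \<longrightarrow> (\<exists>q\<in>P1. le q r \<and> (le q (\<pi> s1) \<longrightarrow>
        (\<exists>\<sigma>2 s2. (\<sigma>2, s2) \<in> members (?n \<tau>2) \<and> le q s2 \<and> forces_eq q (?n \<sigma>1) \<sigma>2)))"
      by (rule cond_automorphism_dense_below[OF \<pi> 1(2)[rule_format, OF m]])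
        (fastforce simp: le_iff members_n)+
    then show "\<forall>r\<in>P1. le r (\<pi> p) \<longrightarrow> (\<exists>q\<in>P1. le q r \<and>
        (le q s1' \<longrightarrow> (\<exists>\<sigma>2 s2. (\<sigma>2, s2) \<in> members (?n \<tau>2) \<and> le q s2 \<and> forces_eq q \<sigma>1' \<sigma>2)))"
      unfolding eq .
  next
    fix \<sigma>2' s2' assume "(\<sigma>2', s2') \<in> members (?n \<tau>2)"
    then obtain \<sigma>2 s2 where m: "(\<sigma>2, s2) \<in> members \<tau>2" and eq: "\<sigma>2' = ?n \<sigma>2" "s2' = \<pi> s2"
      by (auto simp: members_n)
    have "\<forall>r\<in>P1. le r (\<pi> p) \<longrightarrow> (\<exists>q\<in>P1. le q r \<and> (le q (\<pi> s2) \<longrightarrow>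
        (\<exists>\<sigma>1 s1. (\<sigma>1, s1) \<in> members (?n \<tau>1) \<and> le q s1 \<and> forces_eq q \<sigma>1 (?n \<sigma>2))))"
      by (rule cond_automorphism_dense_below[OF \<pi> 1(3)[rule_format, OF m]])
        (fastforce simp: le_iff members_n)+
    then show "\<forall>r\<in>P1. le r (\<pi> p) \<longrightarrow> (\<exists>q\<in>P1. le q r \<and>
        (le q s2' \<longrightarrow> (\<exists>\<sigma>1 s1. (\<sigma>1, s1) \<in> members (?n \<tau>1) \<and> le q s1 \<and> forces_eq q \<sigma>1 \<sigma>2')))"
      unfolding eq .
  qed
qed

lemma forces_mem_automorphism:
  assumes \<pi>: "cond_automorphism \<pi>" and "forces_mem p a b"
  shows "forces_mem (\<pi> p) (name_map \<pi> a) (name_map \<pi> b)"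
proof -
  have "\<pi> p \<in> P1"
    using assms(2) cond_automorphism_P1_iff[OF \<pi>] unfolding forces_mem_def by blast
  moreover have "\<forall>r\<in>P1. le r (\<pi> p) \<longrightarrow> (\<exists>q\<in>P1. le q r \<and>
      (\<exists>\<sigma> s. (\<sigma>, s) \<in> members (name_map \<pi> b) \<and> le q s \<and> forces_eq q (name_map \<pi> a) \<sigma>))"
  proof (rule cond_automorphism_dense_below[OF \<pi>])
    fix r assume "r \<in> P1" "le r p"
    then show "\<exists>q\<in>P1. le q r \<and>
        (\<exists>\<sigma> s. (\<sigma>, s) \<in> members b \<and> le q s \<and> forces_eq q a \<sigma>)"
      using assms(2) unfolding forces_mem_def by blast
  next
    fix q assume "\<exists>\<sigma> s. (\<sigma>, s) \<in> members b \<and> le q s \<and> forces_eq q a \<sigma>"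
    then obtain \<sigma> s where "(\<sigma>, s) \<in> members b" "le q s" "forces_eq q a \<sigma>"
      by blast
    then show "\<exists>\<sigma> s. (\<sigma>, s) \<in> members (name_map \<pi> b) \<and> le (\<pi> q) s \<and>
        forces_eq (\<pi> q) (name_map \<pi> a) \<sigma>"
      by (intro exI[of _ "name_map \<pi> \<sigma>"] exI[of _ "\<pi> s"])
        (auto simp: cond_automorphism_le_iff[OF \<pi>] members_name_map[OF \<pi>]
          intro: forces_eq_automorphism[OF \<pi>])
  qed
  ultimately show ?thesis
    unfolding forces_mem_def by blast
qed

lemma forces_eq_name_eq:
  assumes "forces_eq p t a" and "name_eq a b"
  shows "forces_eq p t b"
  using assms
proof (induction arbitrary: b rule: forces_eq.induct)
  case (1 p \<tau>1 \<tau>2)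
  from 1(4) have
    to_b: "\<And>\<sigma> s. (\<sigma>, s) \<in> members \<tau>2 \<Longrightarrow> \<exists>\<sigma>'. (\<sigma>', s) \<in> members b \<and> name_eq \<sigma> \<sigma>'" and
    from_b: "\<And>\<sigma> s. (\<sigma>, s) \<in> members b \<Longrightarrow> \<exists>\<sigma>'. (\<sigma>', s) \<in> members \<tau>2 \<and> name_eq \<sigma>' \<sigma>"
    by (auto elim: name_eq.cases)
  show ?case
  proof (rule forces_eq.intros; (intro allI impI ballI)?)
    show "p \<in> P1" by fact
  next
    fix \<sigma>1 s1 r assume "(\<sigma>1, s1) \<in> members \<tau>1" "r \<in> P1" "le r p"
    with 1(2) obtain q where "q \<in> P1" "le q r" and
      h: "le q s1 \<longrightarrow> (\<exists>\<sigma>2 s2. (\<sigma>2, s2) \<in> members \<tau>2 \<and> le q s2 \<and>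
            (\<forall>b. name_eq \<sigma>2 b \<longrightarrow> forces_eq q \<sigma>1 b))"
      by blast
    then show "\<exists>q\<in>P1. le q r \<and>
        (le q s1 \<longrightarrow> (\<exists>\<sigma>2 s2. (\<sigma>2, s2) \<in> members b \<and> le q s2 \<and> forces_eq q \<sigma>1 \<sigma>2))"
      using to_b by blast
  next
    fix \<sigma>2' s2 r assume "(\<sigma>2', s2) \<in> members b" "r \<in> P1" "le r p"
    moreover obtain \<sigma>2 where "(\<sigma>2, s2) \<in> members \<tau>2" "name_eq \<sigma>2 \<sigma>2'"
      using from_b \<open>(\<sigma>2', s2) \<in> members b\<close> by blast
    ultimately show "\<exists>q\<in>P1. le q r \<and>
        (le q s2 \<longrightarrow> (\<exists>\<sigma>1 s1. (\<sigma>1, s1) \<in> members \<tau>1 \<and> le q s1 \<and> forces_eq q \<sigma>1 \<sigma>2'))"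
      using 1(3) by blast
  qed
qed

lemma forces_mem_name_eq:
  assumes "forces_mem p t a" and "name_eq a b"
  shows "forces_mem p t b"
proof -
  from assms(2) have "\<And>\<sigma> s. (\<sigma>, s) \<in> members a \<Longrightarrow> \<exists>\<sigma>'. (\<sigma>', s) \<in> members b \<and> name_eq \<sigma> \<sigma>'"
    by (auto elim: name_eq.cases)
  with assms(1) show ?thesis
    unfolding forces_mem_def by (meson forces_eq_name_eq)
qed

lemma forces_mem_mono:
  assumes "forces_mem p t a" and "q \<in> P1" and "le q p"
  shows "forces_mem q t a"
  using assms unfolding forces_mem_def by (meson le_trans_cond)

lemma forces_mem_if_dense:
  assumes "p \<in> P1"
    and "\<And>r. r \<in> P1 \<Longrightarrow> le r p \<Longrightarrow> \<exists>q\<in>P1. le q r \<and> forces_mem q t a"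
  shows "forces_mem p t a"
  using assms unfolding forces_mem_def by (meson le_refl_cond le_trans_cond)

lemma forces_mem_Check_Fix_invariant:
  assumes "supported_by \<rho> A x" and "\<pi> \<in> Fix \<rho> A" and "cond_automorphism \<pi>"
    and "forces_mem q (Check m) x"
  shows "forces_mem (\<pi> q) (Check m) x"
proof -
  have "forces_mem (\<pi> q) (Check m) (name_map \<pi> x)"
    using forces_mem_automorphism[OF assms(3,4)] by simp
  moreover have "name_eq (name_map \<pi> x) x"
    using assms(1,2) unfolding supported_by_def by blast
  ultimately show ?thesis
    by (rule forces_mem_name_eq)
qed

lemma cl_eq_if_rho_closed: "rho_closed \<rho> A \<Longrightarrow> cl \<rho> A = A"
  unfolding cl_def by auto

lemma Succ_disjoint_if_rho_closed: "rho_closed \<rho> A \<Longrightarrow> \<xi> \<notin> A \<Longrightarrow> Succ \<rho> \<xi> \<inter> A = {}"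
  unfolding rho_closed_def Succ_def by auto

lemma less_if_in_Succ: "regressive \<rho> \<Longrightarrow> \<eta> \<in> Succ \<rho> \<xi> \<Longrightarrow> \<xi> < \<eta>"
  unfolding regressive_def Succ_def by auto

lemma flip_in_Fix:
  assumes "flip F \<in> G1cas \<rho>" and "\<forall>c\<in>F. fst c \<notin> A" and "rho_closed \<rho> A"
  shows "flip F \<in> Fix \<rho> A"
  using assms unfolding Fix_def by (auto simp: flip_def cl_eq_if_rho_closed)

lemma G1cas_flip_with_trace:
  fixes \<rho> :: "'w::wellorder \<Rightarrow> 'w"
  assumes reg: "regressive \<rho>" and rc: "rho_closed \<rho> A"
    and "finite E" and "\<forall>c\<in>E. fst c \<notin> A" and "D \<subseteq> E"
  shows "\<exists>F. flip F \<in> G1cas \<rho> \<and> (\<forall>c\<in>F. fst c \<notin> A) \<and> F \<inter> E = D"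
  using assms(3-5)
proof (induction E arbitrary: D rule: finite_ranking_induct[where f = fst])
  case empty
  have "flip {} \<in> G1cas \<rho>"
    using G1cas.G_id by (simp add: flip_empty_set)
  then show ?case
    using empty by blast
next
  case (insert x S)
  show ?case
  proof (cases "x \<in> S")
    case True
    then show ?thesis
      using insert by (simp add: insert_absorb)
  next
    case xS: False
    obtain \<xi> i n where x: "x = (\<xi>, i, n)"
      by (cases x)
    obtain F where F: "flip F \<in> G1cas \<rho>" "\<forall>c\<in>F. fst c \<notin> A" "F \<inter> S = D - {x}"
      using insert.IH[of "D - {x}"] insert.prems by blast
    define T where "T = ({\<xi>} \<union> Succ \<rho> \<xi>) \<times> {i} \<times> {n}"
    have x_in_T: "x \<in> T"
      by (simp add: T_def x)
    have T_avoids_A: "\<forall>c\<in>T. fst c \<notin> A"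
      using Succ_disjoint_if_rho_closed[OF rc] insert.prems x by (auto simp: T_def)
    \<comment> \<open>S lies weakly below \<xi>, while T meets the level \<xi> only in x.\<close>
    have T_disjoint_S: "T \<inter> S = {}"
      using insert.hyps(2) less_if_in_Succ[OF reg] xS x by (fastforce simp: T_def)
    have G1cas_sym_diff: "flip (sym_diff T F) \<in> G1cas \<rho>"
      using G1cas.G_step[OF F(1), of "{n}" \<xi> i] by (simp add: tau_eq_flip flip_comp_flip T_def)
    show ?thesis
    proof (cases "x \<in> F \<longleftrightarrow> x \<in> D")
      case True
      then show ?thesis
        using F xS by (intro exI[of _ F]) auto
    next
      case False
      then show ?thesis
        using F T_avoids_A x_in_T T_disjoint_S G1cas_sym_diff insert.prems(2) xS
        by (intro exI[of _ "sym_diff T F"]) blast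
    qed
  qed
qed

lemma le_map_add_left:
  assumes "\<And>c. c \<in> dom p \<Longrightarrow> c \<in> dom q \<Longrightarrow> q c = p c"
  shows "le (p ++ q) p"
  unfolding le_def map_le_def
proof
  fix c assume "c \<in> dom p"
  then show "p c = (p ++ q) c"
    using assms by (cases "c \<in> dom q") (simp_all add: map_add_dom_app_simps)
qed

lemma exists_Fix_flip_compatible:
  fixes \<rho> :: "'w::wellorder \<Rightarrow> 'w"
  assumes reg: "regressive \<rho>" and rc: "rho_closed \<rho> A" and p: "p \<in> P1"
    and r: "r \<in> P1" "le r (p |` {c. fst c \<in> A})"
  shows "\<exists>F. flip F \<in> Fix \<rho> A \<and> p ++ flip F r \<in> P1
    \<and> le (p ++ flip F r) p \<and> le (p ++ flip F r) (flip F r)"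
proof -
  define E where "E = {c \<in> dom p. fst c \<notin> A}"
  define D where "D = {c \<in> E. r c \<noteq> p c}"
  have "finite E"
    using p unfolding E_def P1_def by auto
  moreover have "\<forall>c\<in>E. fst c \<notin> A" "D \<subseteq> E"
    unfolding E_def D_def by auto
  ultimately obtain F where F: "flip F \<in> G1cas \<rho>" "\<forall>c\<in>F. fst c \<notin> A" "F \<inter> E = D"
    using G1cas_flip_with_trace[OF reg rc] by blast
  have "flip F r c = p c" if c: "c \<in> dom p" "c \<in> dom r" for c
  proof (cases "fst c \<in> A")
    case True
    then have "c \<in> dom (p |` {c. fst c \<in> A})"
      using c by simp
    then have "r c = p c"
      using r(2) True unfolding le_def map_le_def by force
    then show ?thesis
      using True F(2) by (auto simp: flip_def)
  next
    case False
    then have "c \<in> F \<longleftrightarrow> r c \<noteq> p c"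
      using F(3) c unfolding D_def E_def by blast
    then show ?thesis
      using c by (auto simp: flip_def)
  qed
  then have "le (p ++ flip F r) p"
    by (intro le_map_add_left) simp
  moreover have "p ++ flip F r \<in> P1" "le (p ++ flip F r) (flip F r)"
    using p r(1) by (simp_all add: P1_def le_def)
  ultimately show ?thesis
    using flip_in_Fix[OF F(1,2) rc] by blast
qed

lemma forces_mem_restrict_to_support:
  fixes \<rho> :: "'w::wellorder \<Rightarrow> 'w"
  assumes reg: "regressive \<rho>" and rc: "rho_closed \<rho> A" and supp: "supported_by \<rho> A x"
    and p: "p \<in> P1" and p_forces: "forces_mem p (Check m) x"
  shows "forces_mem (p |` {c. fst c \<in> A}) (Check m) x"
proof (rule forces_mem_if_dense)
  show "p |` {c. fst c \<in> A} \<in> P1"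
    using p by (simp add: P1_def)
next
  fix r assume "r \<in> P1" "le r (p |` {c. fst c \<in> A})"
  then obtain F where F: "flip F \<in> Fix \<rho> A" "p ++ flip F r \<in> P1"
    "le (p ++ flip F r) p" "le (p ++ flip F r) (flip F r)"
    using exists_Fix_flip_compatible[OF reg rc p] by blast
  have "forces_mem (flip F (p ++ flip F r)) (Check m) x"
    using forces_mem_Check_Fix_invariant[OF supp F(1) cond_automorphism_flip]
      forces_mem_mono[OF p_forces F(2,3)] .
  moreover have "le (flip F (p ++ flip F r)) r"
    using le_flip[OF F(4), of F] by simp
  moreover have "flip F (p ++ flip F r) \<in> P1"
    using F(2) by (simp add: P1_def)
  ultimately show "\<exists>q\<in>P1. le q r \<and> forces_mem q (Check m) x"
    by blast
qed

lemma forces_not_mem_restrict_to_support: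
  fixes \<rho> :: "'w::wellorder \<Rightarrow> 'w"
  assumes reg: "regressive \<rho>" and rc: "rho_closed \<rho> A" and supp: "supported_by \<rho> A x"
    and p: "p \<in> P1" and p_not: "forces_not_mem p (Check m) x"
  shows "forces_not_mem (p |` {c. fst c \<in> A}) (Check m) x"
  unfolding forces_not_mem_def
proof (intro conjI notI; (elim bexE conjE)?)
  show "p |` {c. fst c \<in> A} \<in> P1"
    using p by (simp add: P1_def)
next
  fix r assume "r \<in> P1" "le r (p |` {c. fst c \<in> A})" and r_forces: "forces_mem r (Check m) x"
  then obtain F where F: "flip F \<in> Fix \<rho> A" "p ++ flip F r \<in> P1"
    "le (p ++ flip F r) p" "le (p ++ flip F r) (flip F r)"
    using exists_Fix_flip_compatible[OF reg rc p] by blast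
  have "forces_mem (flip F r) (Check m) x"
    using forces_mem_Check_Fix_invariant[OF supp F(1) cond_automorphism_flip r_forces] .
  then have "forces_mem (p ++ flip F r) (Check m) x"
    using forces_mem_mono F(2,4) by blast
  then show False
    using p_not F(2,3) unfolding forces_not_mem_def by blast
qed

theorem lemma4p4:
  fixes \<rho> :: "'w::wellorder \<Rightarrow> 'w"
    and x :: "('w, 'i) name"
    and A :: "'w set"
    and m :: nat
    and p :: "'w cond"
  assumes "is_omega1 TYPE('w)"
    and "regressive \<rho>"
    and "HS \<rho> x"
    and "countable A"
    and "rho_closed \<rho> A"
    and "supported_by \<rho> A x"
    and "p \<in> P1"
    and "decides_mem p (Check m) x"
  shows "(forces_mem p (Check m) x \<longrightarrow> forces_mem (p |` {c. fst c \<in> A}) (Check m) x)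
       \<and> (forces_not_mem p (Check m) x \<longrightarrow> forces_not_mem (p |` {c. fst c \<in> A}) (Check m) x)"
  using forces_mem_restrict_to_support[OF assms(2,5,6,7)]
    forces_not_mem_restrict_to_support[OF assms(2,5,6,7)] by blast

end
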